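(* Let $p$ be an odd prime, $k\in\mathbb N$, and $n=p^a m$ with $a\in\mathbb N_0$, $m\in\mathbb N$, $p\nmid m$. Then for every $\varepsilon>0$, \[ \left|\sum_{d\mid n}\left(\frac dp\right)d^k\right|\gg_\varepsilon m^{k-\varepsilon}, \qquad \operatorname{sgn}\left(\sum_{d\mid n}\left(\frac dp\right)d^k\right)=\left(\frac mp\right). \]
   Context: $\left(\frac{\cdot}{p}\right)$ is the Legendre symbol; sums are over positive divisors; $\gg_\varepsilon$ means the inequality $\ge c_\varepsilon m^{k-\varepsilon}$ holds with a constant $c_\varepsilon>0$ depending only on $\varepsilon$. *)

theory Defs
  imports "HOL-Number_Theory.Number_Theory"
begin

end

theory Submission
  imports Defs
begin

(* With S(n) = sum over d | n of (d/p) d^k, divisors divisible by p contribute nothing, so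
   S(p^a m) = S(m), and S is multiplicative.  At a prime power q^e with q <> p, S is the geometric
   sum of (s Q)^i, i <= e, where s = (q/p) = +-1 and Q = q^k >= 2; the identity
   (1 - s Q) G = 1 - (s Q)^(e+1) shows that its sign is s^e and its modulus at least Q^e / 3.
   Multiplying over the prime powers of m gives sgn S(m) = (m/p) and m^k <= 3^omega(m) |S(m)|.
   Finally 3^omega(m) <= C m^eps: there are at most 3^(1/eps) primes below 3^(1/eps), and every
   larger prime q satisfies 3 <= q^eps. *)

lemma Legendre_values: "Legendre a p \<in> {-1, 0, 1}"
  by (simp add: Legendre_def)

lemma Legendre_eq_0_iff: "Legendre a p = 0 \<longleftrightarrow> p dvd a"
  by (simp add: Legendre_def cong_0_iff)

lemma Legendre_one:
  assumes "prime p"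
  shows "Legendre 1 (int p) = 1"
proof -
  have "QuadRes (int p) 1"
    unfolding QuadRes_def by (rule exI[of _ 1]) simp
  then show ?thesis
    using prime_gt_1_nat[OF assms] by (simp add: Legendre_def cong_0_iff)
qed

lemma Legendre_mult:
  assumes "prime p" "2 < p"
  shows "Legendre (a * b) (int p) = Legendre a (int p) * Legendre b (int p)"
proof -
  let ?h = "(p - 1) div 2"
  have "[Legendre (a * b) (int p) = (a * b) ^ ?h] (mod int p)"
    using euler_criterion[OF assms] by blast
  moreover have "[Legendre a (int p) * Legendre b (int p) = a ^ ?h * b ^ ?h] (mod int p)"
    using euler_criterion[OF assms, of a] euler_criterion[OF assms, of b] by (rule cong_mult)
  ultimately have "[Legendre (a * b) (int p) = Legendre a (int p) * Legendre b (int p)] (mod int p)"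
    by (metis cong_sym cong_trans power_mult_distrib)
  then have dvd: "int p dvd Legendre (a * b) (int p) - Legendre a (int p) * Legendre b (int p)"
    by (simp add: cong_iff_dvd_diff)
  have "\<bar>Legendre (a * b) (int p) - Legendre a (int p) * Legendre b (int p)\<bar> \<le> 2"
    using Legendre_values[of "a * b" "int p"] Legendre_values[of a "int p"] Legendre_values[of b "int p"]
    by auto
  then show ?thesis
    using dvd_imp_le_int[OF _ dvd] assms(2) by fastforce
qed

lemma Legendre_power:
  assumes "prime p" "2 < p"
  shows "Legendre (a ^ n) (int p) = Legendre a (int p) ^ n"
  by (induction n) (simp_all add: Legendre_one[OF assms(1)] Legendre_mult[OF assms])

lemma sum_divisors_coprime_mult:
  fixes a b :: nat and f :: "nat \<Rightarrow> 'a::comm_monoid_add"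
  assumes "coprime a b" "a > 0" "b > 0"
  shows "(\<Sum>d | d dvd a * b. f d) = (\<Sum>d1 | d1 dvd a. \<Sum>d2 | d2 dvd b. f (d1 * d2))"
proof -
  let ?D = "{d. d dvd a} \<times> {d. d dvd b}"
  have inj: "inj_on (\<lambda>(x, y). x * y) ?D"
  proof (rule inj_onI, clarify)
    fix x1 y1 x2 y2
    assume dvd: "x1 dvd a" "y1 dvd b" "x2 dvd a" "y2 dvd b" and eq: "x1 * y1 = x2 * y2"
    have "x1 dvd x2 * y2" "x2 dvd x1 * y1"
      using eq by (metis dvd_triv_left)+
    then have "x1 dvd x2" "x2 dvd x1"
      using coprime_divisors[OF dvd(1,4) assms(1)] coprime_divisors[OF dvd(3,2) assms(1)]
      by (simp_all add: coprime_dvd_mult_left_iff)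
    then have "x1 = x2"
      by (rule dvd_antisym)
    moreover have "x1 > 0"
      using dvd(1) assms(2) by (auto intro: dvd_pos_nat)
    ultimately show "x1 = x2 \<and> y1 = y2"
      using eq by simp
  qed
  have image: "(\<lambda>(x, y). x * y) ` ?D = {d. d dvd a * b}"
  proof
    show "(\<lambda>(x, y). x * y) ` ?D \<subseteq> {d. d dvd a * b}"
      by (auto intro: mult_dvd_mono)
    show "{d. d dvd a * b} \<subseteq> (\<lambda>(x, y). x * y) ` ?D"
    proof
      fix d
      assume "d \<in> {d. d dvd a * b}"
      then obtain x y where "d = x * y" "x dvd a" "y dvd b"
        by (auto elim: dvd_productE)
      then show "d \<in> (\<lambda>(x, y). x * y) ` ?D"
        by force
    qed
  qed
  have "(\<Sum>d | d dvd a * b. f d) = (\<Sum>z\<in>?D. f (fst z * snd z))"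
    using sum.reindex[OF inj, of f] image by (simp add: case_prod_beta')
  then show ?thesis
    unfolding sum.cartesian_product by (simp add: case_prod_beta')
qed

lemma sum_divisors_prime_power:
  fixes f :: "nat \<Rightarrow> 'a::comm_monoid_add"
  assumes "prime q"
  shows "(\<Sum>d | d dvd q ^ e. f d) = (\<Sum>i\<le>e. f (q ^ i))"
proof -
  have "{d. d dvd q ^ e} = (\<lambda>i. q ^ i) ` {..e}"
    using divides_primepow_nat[OF assms] by auto
  moreover have "inj_on (\<lambda>i. q ^ i) {..e}"
    using prime_gt_1_nat[OF assms] by (intro inj_onI) simp
  ultimately show ?thesis
    by (simp add: sum.reindex)
qed

lemma sum_divisors_prime_power_mult:
  fixes f :: "nat \<Rightarrow> 'a::comm_monoid_add"
  assumes "prime p" "\<not> p dvd m" "m > 0" and vanish: "\<And>d. p dvd d \<Longrightarrow> f d = 0"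
  shows "(\<Sum>d | d dvd p ^ a * m. f d) = (\<Sum>d | d dvd m. f d)"
proof (rule sum.mono_neutral_right)
  show "finite {d. d dvd p ^ a * m}"
    using assms prime_gt_0_nat[OF assms(1)] by simp
  show "{d. d dvd m} \<subseteq> {d. d dvd p ^ a * m}"
    by auto
  show "\<forall>d\<in>{d. d dvd p ^ a * m} - {d. d dvd m}. f d = 0"
  proof
    fix d
    assume d: "d \<in> {d. d dvd p ^ a * m} - {d. d dvd m}"
    have "p dvd d"
    proof (rule ccontr)
      assume "\<not> p dvd d"
      then have "coprime p d"
        by (rule prime_imp_coprime[OF assms(1)])
      then have "coprime d (p ^ a)"
        by (simp add: coprime_commute)
      then show False
        using d coprime_dvd_mult_right_iff by blast
    qed
    then show "f d = 0"
      by (rule vanish)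
  qed
qed

lemma prime_power_coprime_induct [consumes 1, case_names one prime_power_mult]:
  fixes P :: "nat \<Rightarrow> bool"
  assumes "n > 0" "P 1"
    and step: "\<And>q e r. prime q \<Longrightarrow> e > 0 \<Longrightarrow> r > 0 \<Longrightarrow> \<not> q dvd r \<Longrightarrow> P r \<Longrightarrow> P (q ^ e * r)"
  shows "P n"
  using assms(1)
proof (induction n rule: less_induct)
  case (less n)
  show ?case
  proof (cases "n = 1")
    case True
    then show ?thesis using assms(2) by simp
  next
    case False
    then obtain q where q: "prime q" "q dvd n"
      using prime_factor_nat by blast
    have nonzero: "n \<noteq> 0" and nonunit: "\<not> is_unit q"
      using q(1) less.prems by auto
    then obtain r where r: "n = q ^ multiplicity q n * r" "\<not> q dvd r"
      by (rule multiplicity_decompose')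
    have e: "multiplicity q n > 0"
      using q nonzero by (simp add: prime_multiplicity_gt_zero_iff)
    have "r > 0"
      using r(1) nonzero by (auto intro!: gr0I)
    moreover have "1 < q ^ multiplicity q n"
      using prime_gt_1_nat[OF q(1)] e by (rule one_less_power)
    ultimately have "r < n"
      using r(1) by (metis mult_1 mult_less_cancel2)
    then show ?thesis
      using step[OF q(1) e \<open>r > 0\<close> r(2) less.IH[OF \<open>r < n\<close> \<open>r > 0\<close>]] r(1) by simp
  qed
qed

lemma prod_subset_prime_factors_le:
  fixes m :: nat
  assumes "m > 0" "A \<subseteq> prime_factors m"
  shows "\<Prod>A \<le> m"
proof -
  have "\<Prod>A dvd (\<Prod>q\<in>A. q ^ multiplicity q m)"
    using assms by (intro prod_dvd_prod dvd_power disjI1) (auto simp: prime_factors_multiplicity)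
  also have "\<dots> dvd (\<Prod>q\<in>prime_factors m. q ^ multiplicity q m)"
    using assms(2) by (intro prod_dvd_prod_subset) auto
  also have "\<dots> = m"
    using assms(1) by (simp add: prod_prime_factors)
  finally show ?thesis
    using assms(1) by (rule dvd_imp_le)
qed

lemma sgn_one_minus:
  fixes x :: "'a::linordered_idom"
  assumes "\<bar>x\<bar> > 1"
  shows "sgn (1 - x) = - sgn x"
  using assms by (auto simp: sgn_if abs_if split: if_splits)

lemma geometric_sum_sgn_and_lower_bound:
  fixes Q s :: "'a::linordered_idom"
  assumes Q: "Q \<ge> 2" and s: "\<bar>s\<bar> = 1"
  shows "sgn (\<Sum>i\<le>e. (s * Q) ^ i) = s ^ e \<and> Q ^ e \<le> 3 * \<bar>\<Sum>i\<le>e. (s * Q) ^ i\<bar>"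
proof
  define G where "G = (\<Sum>i\<le>e. (s * Q) ^ i)"
  have telescope: "(1 - s * Q) * G = 1 - (s * Q) ^ Suc e"
    unfolding G_def by (rule sum_gp_basic)
  have abs_sQ: "\<bar>(s * Q) ^ n\<bar> = Q ^ n" for n
    using Q s by (simp add: abs_mult power_abs)
  have sgn_s: "sgn s = s"
    using s by (cases "s \<ge> 0") auto
  have sgn_sQ: "sgn ((s * Q) ^ n) = s ^ n" for n
    using Q sgn_s by (simp add: sgn_mult)
  have "1 < Q"
    using Q by simp
  then have "1 < Q ^ Suc e"
    using one_less_power zero_less_Suc by blast
  have "sgn (1 - s * Q) = - s"
    using sgn_one_minus[of "s * Q"] abs_sQ[of 1] sgn_sQ[of 1] \<open>1 < Q\<close> by simp
  moreover have "sgn (1 - (s * Q) ^ Suc e) = - (s * s ^ e)"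
    using sgn_one_minus[of "(s * Q) ^ Suc e"] abs_sQ[of "Suc e"] sgn_sQ[of "Suc e"] \<open>1 < Q ^ Suc e\<close>
    by (metis power_Suc)
  ultimately have "s * sgn G = s * s ^ e"
    by (metis telescope sgn_mult minus_mult_left neg_equal_iff_equal)
  then show "sgn G = s ^ e"
    using s by auto
  have "Q ^ Suc e - 1 \<le> \<bar>1 - (s * Q) ^ Suc e\<bar>"
    using abs_triangle_ineq2[of "(s * Q) ^ Suc e" 1] abs_sQ[of "Suc e"] by (simp add: abs_minus_commute)
  also have "\<dots> = \<bar>1 - s * Q\<bar> * \<bar>G\<bar>"
    by (simp only: telescope[symmetric] abs_mult)
  also have "\<dots> \<le> (1 + Q) * \<bar>G\<bar>"
    using abs_triangle_ineq4[of 1 "s * Q"] abs_sQ[of 1] by (simp add: mult_right_mono)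
  finally have "Q ^ Suc e - 1 \<le> (1 + Q) * \<bar>G\<bar>" .
  moreover have "(1 + Q) * Q ^ e \<le> 3 * (Q ^ Suc e - 1)"
  proof -
    have "3 * 1 \<le> (2 * Q - 1) * Q ^ e"
      using Q by (intro mult_mono) simp_all
    then show ?thesis
      by (simp add: algebra_simps)
  qed
  ultimately have "(1 + Q) * Q ^ e \<le> (1 + Q) * (3 * \<bar>G\<bar>)"
    by (simp add: algebra_simps)
  then show "Q ^ e \<le> 3 * \<bar>G\<bar>"
    using Q by (simp add: mult_le_cancel_left_pos)
qed

lemma card_prime_factors_prime_power_mult:
  fixes q r :: nat
  assumes "prime q" "e > 0" "r > 0" "\<not> q dvd r"
  shows "card (prime_factors (q ^ e * r)) = Suc (card (prime_factors r))"
proof -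
  have "prime_factors (q ^ e * r) = insert q (prime_factors r)"
    using assms prime_gt_0_nat[OF assms(1)]
    by (simp add: prime_factors_product prime_factors_power prime_prime_factors)
  moreover have "q \<notin> prime_factors r"
    using assms(4) by auto
  ultimately show ?thesis
    by simp
qed

lemma power_card_prime_factors_le:
  fixes c \<epsilon> :: real and m :: nat
  assumes "c \<ge> 1" "\<epsilon> > 0" "m > 0"
  shows "c ^ card (prime_factors m) \<le> c ^ nat \<lceil>c powr (1 / \<epsilon>)\<rceil> * real m powr \<epsilon>"
proof -
  define B where "B = c powr (1 / \<epsilon>)"
  define small where "small = {q \<in> prime_factors m. real q < B}"
  define large where "large = {q \<in> prime_factors m. B \<le> real q}"
  have "prime_factors m = small \<union> large" "small \<inter> large = {}" "finite small" "finite large"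
    unfolding small_def large_def by auto
  then have card: "card (prime_factors m) = card small + card large"
    using card_Un_disjoint[of small large] by simp
  have "small \<subseteq> {..<nat \<lceil>B\<rceil>}"
  proof
    fix q
    assume "q \<in> small"
    then have "real q < real (nat \<lceil>B\<rceil>)"
      unfolding small_def using real_nat_ceiling_ge[of B] by (simp only: mem_Collect_eq) linarith
    then show "q \<in> {..<nat \<lceil>B\<rceil>}"
      by simp
  qed
  then have "card small \<le> nat \<lceil>B\<rceil>"
    using card_mono[OF finite_lessThan] by fastforce
  then have small_bound: "c ^ card small \<le> c ^ nat \<lceil>B\<rceil>"
    using assms(1) by (rule power_increasing)
  have "B powr \<epsilon> = c"
    using assms(1,2) by (simp add: B_def powr_powr)
  then have "c ^ card large = (\<Prod>q\<in>large. B powr \<epsilon>)"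
    by simp
  also have "\<dots> \<le> (\<Prod>q\<in>large. real q powr \<epsilon>)"
  proof (rule prod_mono)
    fix q
    assume "q \<in> large"
    then show "0 \<le> B powr \<epsilon> \<and> B powr \<epsilon> \<le> real q powr \<epsilon>"
      using assms(2) unfolding large_def B_def by (auto intro: powr_mono2)
  qed
  also have "\<dots> = real (\<Prod>large) powr \<epsilon>"
    by (simp add: prod_powr_distrib)
  also have "\<dots> \<le> real m powr \<epsilon>"
  proof -
    have "\<Prod>large \<le> m"
      using prod_subset_prime_factors_le[OF assms(3)] by (auto simp: large_def)
    then have "real (\<Prod>large) \<le> real m"
      by (simp only: of_nat_le_iff)
    then show ?thesis
      by (rule powr_mono2[rotated 2]) (use assms(2) in \<open>auto intro: prod_nonneg\<close>)
  qed
  finally have large_bound: "c ^ card large \<le> real m powr \<epsilon>" .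
  have "c ^ card (prime_factors m) = c ^ card small * c ^ card large"
    by (simp add: card power_add)
  also have "\<dots> \<le> c ^ nat \<lceil>B\<rceil> * real m powr \<epsilon>"
    using small_bound large_bound assms(1) by (intro mult_mono) auto
  finally show ?thesis
    unfolding B_def .
qed

definition legendre_divisor_sum :: "nat \<Rightarrow> nat \<Rightarrow> nat \<Rightarrow> int" where
  "legendre_divisor_sum p k n = (\<Sum>d | d dvd n. Legendre (int d) (int p) * int d ^ k)"

lemma legendre_divisor_sum_coprime_mult:
  assumes "prime p" "2 < p" "coprime a b" "a > 0" "b > 0"
  shows "legendre_divisor_sum p k (a * b) = legendre_divisor_sum p k a * legendre_divisor_sum p k b"
proof -
  have "legendre_divisor_sum p k (a * b) = (\<Sum>d1 | d1 dvd a. \<Sum>d2 | d2 dvd b.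
          Legendre (int (d1 * d2)) (int p) * int (d1 * d2) ^ k)"
    unfolding legendre_divisor_sum_def by (rule sum_divisors_coprime_mult[OF assms(3-5)])
  also have "\<dots> = (\<Sum>d1 | d1 dvd a. \<Sum>d2 | d2 dvd b.
          (Legendre (int d1) (int p) * int d1 ^ k) * (Legendre (int d2) (int p) * int d2 ^ k))"
    by (simp add: Legendre_mult[OF assms(1,2)] power_mult_distrib algebra_simps)
  finally show ?thesis
    unfolding legendre_divisor_sum_def by (simp add: sum_product)
qed

lemma legendre_divisor_sum_prime_power:
  assumes "prime p" "2 < p" "prime q"
  shows "legendre_divisor_sum p k (q ^ e) = (\<Sum>i\<le>e. (Legendre (int q) (int p) * int q ^ k) ^ i)"
  unfolding legendre_divisor_sum_def sum_divisors_prime_power[OF assms(3)]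
  by (simp add: Legendre_power[OF assms(1,2)] power_mult_distrib power_mult[symmetric] mult.commute)

lemma legendre_divisor_sum_prime_power_mult:
  assumes "prime p" "\<not> p dvd m" "m > 0"
  shows "legendre_divisor_sum p k (p ^ a * m) = legendre_divisor_sum p k m"
  unfolding legendre_divisor_sum_def
  by (rule sum_divisors_prime_power_mult[OF assms]) (simp add: Legendre_eq_0_iff)

lemma legendre_divisor_sum_sgn_and_lower_bound:
  assumes p: "prime p" "2 < p" and k: "k \<ge> 1" and "m > 0" "\<not> p dvd m"
  shows "sgn (legendre_divisor_sum p k m) = Legendre (int m) (int p) \<and>
         int m ^ k \<le> 3 ^ card (prime_factors m) * \<bar>legendre_divisor_sum p k m\<bar>"
  using assms(4,5)
proof (induction m rule: prime_power_coprime_induct)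
  case one
  have "{d. d dvd (1::nat)} = {1}"
    by auto
  then show ?case
    using Legendre_one[OF p(1)] by (simp add: legendre_divisor_sum_def)
next
  case (prime_power_mult q e r)
  let ?S = "legendre_divisor_sum p k"
  define s where "s = Legendre (int q) (int p)"
  define Q where "Q = int q ^ k"
  have "q \<noteq> p" "\<not> p dvd r"
    using prime_power_mult.prems prime_power_mult.hyps(2) by auto
  then have IH: "sgn (?S r) = Legendre (int r) (int p)"
    "int r ^ k \<le> 3 ^ card (prime_factors r) * \<bar>?S r\<bar>"
    using prime_power_mult.IH by auto
  have "\<not> int p dvd int q"
    using \<open>q \<noteq> p\<close> p(1) prime_power_mult.hyps(1) primes_dvd_imp_eq by auto
  then have "\<bar>s\<bar> = 1"
    using Legendre_values[of "int q" "int p"] Legendre_eq_0_iff[of "int q" "int p"]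
    unfolding s_def by auto
  moreover have "Q \<ge> 2"
  proof -
    have "2 \<le> q ^ 1"
      using prime_ge_2_nat[OF prime_power_mult.hyps(1)] by simp
    also have "\<dots> \<le> q ^ k"
      using k prime_ge_1_nat[OF prime_power_mult.hyps(1)] by (rule power_increasing)
    finally show ?thesis
      unfolding Q_def by (simp flip: of_nat_power)
  qed
  ultimately have G: "sgn (\<Sum>i\<le>e. (s * Q) ^ i) = s ^ e"
    "Q ^ e \<le> 3 * \<bar>\<Sum>i\<le>e. (s * Q) ^ i\<bar>"
    using geometric_sum_sgn_and_lower_bound by blast+
  have prime_power: "?S (q ^ e) = (\<Sum>i\<le>e. (s * Q) ^ i)"
    unfolding s_def Q_def by (rule legendre_divisor_sum_prime_power[OF p prime_power_mult.hyps(1)])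
  have split: "?S (q ^ e * r) = ?S (q ^ e) * ?S r"
    using prime_power_mult.hyps prime_gt_0_nat
    by (intro legendre_divisor_sum_coprime_mult[OF p]) (simp_all add: prime_imp_coprime)
  have "sgn (?S (q ^ e * r)) = s ^ e * Legendre (int r) (int p)"
    unfolding split sgn_mult prime_power G(1) IH(1) ..
  also have "\<dots> = Legendre (int (q ^ e * r)) (int p)"
    unfolding s_def by (simp add: Legendre_mult[OF p] Legendre_power[OF p])
  finally have "sgn (?S (q ^ e * r)) = Legendre (int (q ^ e * r)) (int p)" .
  moreover have "int (q ^ e * r) ^ k \<le> 3 ^ card (prime_factors (q ^ e * r)) * \<bar>?S (q ^ e * r)\<bar>"
  proof -
    have "int (q ^ e * r) ^ k = Q ^ e * int r ^ k"
      unfolding Q_def by (simp add: power_mult_distrib power_mult[symmetric] mult.commute)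
    also have "\<dots> \<le> (3 * \<bar>?S (q ^ e)\<bar>) * (3 ^ card (prime_factors r) * \<bar>?S r\<bar>)"
      using G(2) IH(2) prime_power by (intro mult_mono) simp_all
    also have "\<dots> = 3 ^ Suc (card (prime_factors r)) * \<bar>?S (q ^ e) * ?S r\<bar>"
      by (simp add: abs_mult ac_simps)
    finally show ?thesis
      by (simp only: split card_prime_factors_prime_power_mult[OF prime_power_mult.hyps(1-4)])
  qed
  ultimately show ?case ..
qed

lemma legendre_divisor_sum_abs_lower_bound:
  fixes \<epsilon> :: real
  assumes "prime p" "2 < p" "k \<ge> 1" "m > 0" "\<not> p dvd m" "\<epsilon> > 0"
  shows "real m powr (real k - \<epsilon>)
           \<le> 3 ^ nat \<lceil>3 powr (1 / \<epsilon>)\<rceil> * \<bar>legendre_divisor_sum p k m\<bar>"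
proof -
  define C :: real where "C = 3 ^ nat \<lceil>3 powr (1 / \<epsilon>)\<rceil>"
  define S :: real where "S = \<bar>legendre_divisor_sum p k m\<bar>"
  have "real m powr \<epsilon> * real m powr (real k - \<epsilon>) = real m ^ k"
    using assms(4) by (simp add: powr_add[symmetric] powr_realpow)
  also have "\<dots> = real_of_int (int m ^ k)"
    by simp
  also have "\<dots> \<le> real_of_int (3 ^ card (prime_factors m) * \<bar>legendre_divisor_sum p k m\<bar>)"
    using legendre_divisor_sum_sgn_and_lower_bound[OF assms(1-5)] by (simp only: of_int_le_iff)
  also have "\<dots> = 3 ^ card (prime_factors m) * S"
    unfolding S_def by simp
  also have "\<dots> \<le> (C * real m powr \<epsilon>) * S"
    using power_card_prime_factors_le[of 3 \<epsilon> m] assms(4,6) unfolding C_def S_def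
    by (intro mult_right_mono) simp_all
  finally have "real m powr \<epsilon> * real m powr (real k - \<epsilon>) \<le> real m powr \<epsilon> * (C * S)"
    by (simp add: ac_simps)
  then show ?thesis
    using assms(4) unfolding C_def S_def by simp
qed

theorem lemma7p1:
  fixes \<epsilon> :: real
  assumes "\<epsilon> > 0"
  shows "\<exists>c::real. c > 0 \<and>
    (\<forall>(p::nat) (k::nat) (a::nat) (m::nat).
       prime p \<and> odd p \<and> k \<ge> 1 \<and> m \<ge> 1 \<and> \<not> p dvd m \<longrightarrow>
       real_of_int \<bar>\<Sum>d | d dvd p ^ a * m. Legendre (int d) (int p) * int d ^ k\<bar>
          \<ge> c * real m powr (real k - \<epsilon>) \<and>
       sgn (\<Sum>d | d dvd p ^ a * m. Legendre (int d) (int p) * int d ^ k)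
          = Legendre (int m) (int p))"
proof -
  define C :: real where "C = 3 ^ nat \<lceil>3 powr (1 / \<epsilon>)\<rceil>"
  show ?thesis
    unfolding legendre_divisor_sum_def[symmetric]
  proof (intro exI[of _ "1 / C"] conjI allI impI)
    show "1 / C > 0"
      unfolding C_def by simp
    fix p k a m :: nat
    assume "prime p \<and> odd p \<and> k \<ge> 1 \<and> m \<ge> 1 \<and> \<not> p dvd m"
    then have p: "prime p" "2 < p" and "k \<ge> 1" "m > 0" "\<not> p dvd m"
      using prime_ge_2_nat[of p] by (auto simp: le_less)
    then have reduce: "legendre_divisor_sum p k (p ^ a * m) = legendre_divisor_sum p k m"
      by (intro legendre_divisor_sum_prime_power_mult)
    show "sgn (legendre_divisor_sum p k (p ^ a * m)) = Legendre (int m) (int p)"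
      using legendre_divisor_sum_sgn_and_lower_bound[OF p \<open>k \<ge> 1\<close> \<open>m > 0\<close> \<open>\<not> p dvd m\<close>] reduce
      by simp
    show "1 / C * real m powr (real k - \<epsilon>) \<le> real_of_int \<bar>legendre_divisor_sum p k (p ^ a * m)\<bar>"
      using legendre_divisor_sum_abs_lower_bound[OF p \<open>k \<ge> 1\<close> \<open>m > 0\<close> \<open>\<not> p dvd m\<close> assms] reduce
      unfolding C_def by (simp add: field_simps)
  qed
qed

end
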